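(* Let $(L,\sqsubseteq)$ be a countably complete lattice, $F:L\to L$ monotone and $\omega$-cocontinuous, and $a\in L^\omega$ with $a_{n+1}\sqsubseteq a_n$ for all $n$. Define $c_m=\inf_{n\ge m}\sup_{k\ge n}F^k(a_k)$. Then $c_m\sqsubseteq F(c_m)$ for all $m\in\omega$. In particular, for every $\ell\in L$, $\inf_{n\in\omega}\sup_{k\ge n}F^k(\ell)$ is a postfixed point of $F$.
   Context: A countably complete lattice is a lattice in which every countable subset (including $\emptyset$) has a supremum and an infimum. $F$ is $\omega$-cocontinuous if $F(\inf_n c_n)=\inf_n F(c_n)$ for every descending chain $(c_n)$. $F^k$ is the $k$-fold iterate; a postfixed point is an $x$ with $x\sqsubseteq F(x)$. *)

theory Defs
  imports Main "HOL-Library.Countable_Complete_Lattices"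
begin

definition omega_cocontinuous :: "('a::countable_complete_lattice \<Rightarrow> 'a) \<Rightarrow> bool" where
  "omega_cocontinuous F \<longleftrightarrow>
     (\<forall>c :: nat \<Rightarrow> 'a. (\<forall>n. c (Suc n) \<le> c n) \<longrightarrow> F (INF n. c n) = (INF n. F (c n)))"

end

theory Submission
  imports Defs
begin

text \<open>Write \<open>s n = (SUP k\<in>{n..}. F\<^sup>k (a k))\<close>. The tails \<open>s n\<close> decrease, and since \<open>a\<close>
  decreases and \<open>F\<close> is monotone, \<open>s (n + 1) \<le> F (s n)\<close>. Hence \<open>c\<^sub>m = (INF n\<in>{m..}. s n)\<close>
  lies below every \<open>F (s n)\<close> with \<open>n \<ge> m\<close>, and \<open>\<omega>\<close>-cocontinuity identifies the infimum of
  these with \<open>F c\<^sub>m\<close>. The constant sequence \<open>a k = l\<close> gives the second claim.\<close>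

lemma ccINF_atLeast_eq_INF_shift:
  fixes s :: "nat \<Rightarrow> 'a::countable_complete_lattice"
  shows "(INF n\<in>{m..}. s n) = (INF n. s (m + n))"
proof -
  have "{m..} = (+) m ` UNIV"
    using image_add_atLeast[of m 0] by simp
  then show ?thesis
    by (simp add: image_image)
qed

lemma omega_cocontinuous_INF_atLeast:
  assumes "omega_cocontinuous F" and "\<And>n. s (Suc n) \<le> s n"
  shows "F (INF n\<in>{m..}. s n) = (INF n\<in>{m..}. F (s n))"
  using assms unfolding ccINF_atLeast_eq_INF_shift omega_cocontinuous_def by simp

lemma omega_cocontinuous_postfixed_INF_atLeast:
  assumes "omega_cocontinuous F"
    and decreasing: "\<And>n. s (Suc n) \<le> s n"
    and step: "\<And>n. s (Suc n) \<le> F (s n)"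
  shows "(INF n\<in>{m..}. s n) \<le> F (INF n\<in>{m..}. s n)"
  unfolding omega_cocontinuous_INF_atLeast[of F s, OF assms(1,2)]
proof (rule ccINF_greatest)
  fix n assume "n \<in> {m..}"
  then have "(INF n\<in>{m..}. s n) \<le> s (Suc n)"
    by (intro ccINF_lower) auto
  also have "\<dots> \<le> F (s n)"
    by (rule step)
  finally show "(INF n\<in>{m..}. s n) \<le> F (s n)" .
qed simp

lemma ccSUP_atLeast_Suc_le:
  fixes f :: "nat \<Rightarrow> 'a::countable_complete_lattice"
  shows "(SUP k\<in>{Suc n..}. f k) \<le> (SUP k\<in>{n..}. f k)"
  by (rule ccSUP_subset_mono) auto

lemma funpow_tail_SUP_Suc_le:
  fixes F :: "'a::countable_complete_lattice \<Rightarrow> 'a"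
  assumes "mono F" and decreasing: "\<And>n. a (Suc n) \<le> a n"
  shows "(SUP k\<in>{Suc n..}. (F ^^ k) (a k)) \<le> F (SUP k\<in>{n..}. (F ^^ k) (a k))"
proof (rule ccSUP_least)
  fix i assume "i \<in> {Suc n..}"
  then obtain k where k: "i = Suc k" "n \<le> k"
    by (cases i) auto
  have "(F ^^ k) (a (Suc k)) \<le> (F ^^ k) (a k)"
    by (rule funpow_mono[OF \<open>mono F\<close> decreasing])
  also have "\<dots> \<le> (SUP k\<in>{n..}. (F ^^ k) (a k))"
    using k by (intro ccSUP_upper) auto
  finally show "(F ^^ i) (a i) \<le> F (SUP k\<in>{n..}. (F ^^ k) (a k))"
    using \<open>mono F\<close> k by (auto dest: monoD)
qed simp

theorem mainTheorem7:
  fixes F :: "'a::countable_complete_lattice \<Rightarrow> 'a" and a :: "nat \<Rightarrow> 'a"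
  assumes "mono F"
    and "omega_cocontinuous F"
    and "\<forall>n. a (Suc n) \<le> a n"
  shows "(\<forall>m. (INF n\<in>{m..}. SUP k\<in>{n..}. (F ^^ k) (a k))
                \<le> F (INF n\<in>{m..}. SUP k\<in>{n..}. (F ^^ k) (a k)))
       \<and> (\<forall>l. (INF n. SUP k\<in>{n..}. (F ^^ k) l) \<le> F (INF n. SUP k\<in>{n..}. (F ^^ k) l))"
proof -
  have postfixed: "(INF n\<in>{m..}. SUP k\<in>{n..}. (F ^^ k) (b k))
      \<le> F (INF n\<in>{m..}. SUP k\<in>{n..}. (F ^^ k) (b k))"
    if "\<And>n. b (Suc n) \<le> b n" for b m
    using assms(2) ccSUP_atLeast_Suc_le funpow_tail_SUP_Suc_le[of F b, OF assms(1) that]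
    by (rule omega_cocontinuous_postfixed_INF_atLeast)
  show ?thesis
    using postfixed[of a] postfixed[of "\<lambda>_. l" 0 for l] assms(3)
    by (simp add: atLeast_0)
qed

end
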